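(* Let $p(n,k)$ be the number of $\mathbf{3}$-free naturally labelled posets on $[n]$ with exactly $k$ minimal elements. Then $p(0,0)=1$, $p(n,0)=0$ for $n\ge1$, $p(n,k)=0$ for $n<k$, and for $n\ge1$, $k\ge1$: $$p(n,k)=p(n-1,k-1)+(2^k-1)\,p(n-1,k).$$ Consequently $p(n,k)=S_2[n,k]$, where the $q$-Stirling numbers of the second kind $S_q[n,k]$ satisfy $S_q[n,k]=S_q[n-1,k-1]+[k]_q\,S_q[n-1,k]$ with $[k]_q=1+q+\dots+q^{k-1}$ and the same initial conditions. Moreover, the bivariate generating function $F(z,y)=\sum_{n\ge k\ge 0}p(n,k)z^ny^k$ satisfies $$F(z,y)=1+z\big(F(z,2y)-(1-y)F(z,y)\big),$$ and $$F(z,y)=\sum_{k\ge0}\frac{z^ky^k}{\prod_{i=1}^k\big(1-(2^i-1)z\big)}.$$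
   Context: A partial order $\preceq$ on $[n]$ is naturally labelled if $x\prec y$ implies $x<y$. It is $\mathbf{3}$-free if there are no three elements $x\prec y\prec z$. *)

theory Defs
  imports Main "HOL-Computational_Algebra.Formal_Power_Series"
begin

definition naturally_labelled :: "nat rel \<Rightarrow> bool" where
  "naturally_labelled r \<longleftrightarrow> (\<forall>x y. (x, y) \<in> r \<and> x \<noteq> y \<longrightarrow> x < y)"

definition three_free :: "nat rel \<Rightarrow> bool" where
  "three_free r \<longleftrightarrow> \<not> (\<exists>x y z. (x, y) \<in> r \<and> x \<noteq> y \<and> (y, z) \<in> r \<and> y \<noteq> z)"

definition minimal_elements :: "nat \<Rightarrow> nat rel \<Rightarrow> nat set" where
  "minimal_elements n r = {x \<in> {1..n}. \<forall>y. (y, x) \<in> r \<longrightarrow> y = x}"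

definition p :: "nat \<Rightarrow> nat \<Rightarrow> nat" where
  "p n k = card {r. partial_order_on {1..n} r \<and> naturally_labelled r \<and> three_free r
                   \<and> card (minimal_elements n r) = k}"

definition qint :: "'a::comm_semiring_1 \<Rightarrow> nat \<Rightarrow> 'a" where
  "qint q k = (\<Sum>i<k. q ^ i)"

fun qStirling2 :: "'a::comm_semiring_1 \<Rightarrow> nat \<Rightarrow> nat \<Rightarrow> 'a" where
  "qStirling2 q 0 0 = 1"
| "qStirling2 q 0 (Suc k) = 0"
| "qStirling2 q (Suc n) 0 = 0"
| "qStirling2 q (Suc n) (Suc k) = qStirling2 q n k + qint q (Suc k) * qStirling2 q n (Suc k)"

text \<open>Bivariate generating function F(z,y) = sum p(n,k) z^n y^k, represented as a formal
  power series in y whose coefficients are formal power series in z (over the rationals).\<close>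
definition F :: "rat fps fps" where
  "F = Abs_fps (\<lambda>k. Abs_fps (\<lambda>n. of_nat (p n k)))"

definition subst_2y :: "rat fps fps \<Rightarrow> rat fps fps" where
  "subst_2y G = Abs_fps (\<lambda>k. fps_const (2 ^ k) * fps_nth G k)"

end

theory Submission
  imports Defs
begin

text \<open>In a naturally labelled poset on \<open>[m + 1]\<close> the element \<open>m + 1\<close> is maximal. Deleting it
  leaves a \<open>3\<close>-free naturally labelled poset \<open>r\<close> on \<open>[m]\<close>, and because there are no \<open>3\<close>-chains
  the elements below \<open>m + 1\<close> form a set \<open>D\<close> of minimal elements of \<open>r\<close>; conversely every such
  pair \<open>(r, D)\<close> arises. The new element is minimal exactly when \<open>D = {}\<close>, and otherwise the
  minimal elements are those of \<open>r\<close>. So a poset with \<open>k\<close> minimal elements has one extension with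
  \<open>k + 1\<close> and \<open>2^k - 1\<close> extensions with \<open>k\<close> minimal elements, which is the recurrence of \<open>S\<^sub>2\<close>.
  Read column by column, the recurrence says that the coefficient \<open>F\<^sub>k(z)\<close> of \<open>y^k\<close> in \<open>F\<close>
  satisfies \<open>F\<^sub>k = z F\<^sub>k\<^sub>-\<^sub>1 + (2^k - 1) z F\<^sub>k\<close>, which gives both generating function identities.\<close>

lemma card_Pow_filter_if_empty:
  assumes "finite M"
  shows "card {D \<in> Pow M. (if D = {} then a else b) = k}
           = of_bool (a = k) + of_bool (b = k) * (2 ^ card M - 1)"
proof -
  have nonempty: "card (Pow M - {{}}) = 2 ^ card M - 1"
    using assms by (subst card_Diff_singleton) (auto simp: card_Pow)
  have "{D \<in> Pow M. (if D = {} then a else b) = k} =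
      (if a = k then {{}} else {}) \<union> (if b = k then Pow M - {{}} else {})"
    by auto
  also have "card \<dots> = of_bool (a = k) + of_bool (b = k) * card (Pow M - {{}})"
    using assms by (subst card_Un_disjoint) auto
  finally show ?thesis
    by (simp only: nonempty)
qed

lemma card_filter_bij_betw:
  assumes "bij_betw f A B"
  shows "card {y \<in> B. P y} = card {x \<in> A. P (f x)}"
proof -
  have "f ` {x \<in> A. P (f x)} = {y \<in> B. P y}"
    using bij_betw_imp_surj_on[OF assms] by blast
  then have "bij_betw f {x \<in> A. P (f x)} {y \<in> B. P y}"
    using assms by (rule bij_betw_subset[rotated 2]) auto
  then show ?thesis
    by (simp add: bij_betw_same_card)
qed

lemma partial_order_on_Restr:
  assumes "partial_order_on A r" and "B \<subseteq> A"
  shows "partial_order_on B (Restr r B)"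
  using assms trans_Restr antisym_Restr
  unfolding partial_order_on_def preorder_on_def refl_on_def by blast

lemma naturally_labelled_mono: "r \<subseteq> s \<Longrightarrow> naturally_labelled s \<Longrightarrow> naturally_labelled r"
  unfolding naturally_labelled_def by blast

lemma three_free_mono: "r \<subseteq> s \<Longrightarrow> three_free s \<Longrightarrow> three_free r"
  unfolding three_free_def by blast

definition three_free_posets :: "nat \<Rightarrow> nat rel set" where
  "three_free_posets n =
     {r. partial_order_on {1..n} r \<and> naturally_labelled r \<and> three_free r}"

definition strictly_below :: "nat rel \<Rightarrow> nat \<Rightarrow> nat set" where
  "strictly_below r x = {y. (y, x) \<in> r} - {x}"

definition add_top :: "nat rel \<Rightarrow> nat \<Rightarrow> nat set \<Rightarrow> nat rel" where
  "add_top r x D = r \<union> insert (x, x) (D \<times> {x})"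

lemma three_free_posets_subset:
  "r \<in> three_free_posets n \<Longrightarrow> r \<subseteq> {1..n} \<times> {1..n}"
  unfolding three_free_posets_def using partial_order_onD(4) by blast

lemma finite_three_free_posets: "finite (three_free_posets n)"
proof (rule finite_subset)
  show "three_free_posets n \<subseteq> Pow ({1..n} \<times> {1..n})"
    using three_free_posets_subset by blast
qed simp

lemma p_eq_card_three_free_posets:
  "p n k = card {r \<in> three_free_posets n. card (minimal_elements n r) = k}"
  unfolding p_def three_free_posets_def by (rule arg_cong[where f = card]) auto

lemma minimal_elements_subset: "minimal_elements n r \<subseteq> {1..n}"
  unfolding minimal_elements_def by auto

lemma finite_minimal_elements: "finite (minimal_elements n r)"
  using minimal_elements_subset by (rule finite_subset) simp

lemma add_top_in_three_free_posets:
  assumes r: "r \<in> three_free_posets m" and D: "D \<subseteq> minimal_elements m r"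
  shows "add_top r (Suc m) D \<in> three_free_posets (Suc m)"
proof -
  have sub: "r \<subseteq> {1..m} \<times> {1..m}"
    using three_free_posets_subset[OF r] .
  have po: "refl_on {1..m} r" "trans r" "antisym r" "naturally_labelled r" "three_free r"
    using r unfolding three_free_posets_def partial_order_on_def preorder_on_def by auto
  have D_min: "\<And>x y. x \<in> D \<Longrightarrow> (y, x) \<in> r \<Longrightarrow> y = x" and D_sub: "D \<subseteq> {1..m}"
    using D unfolding minimal_elements_def by auto
  let ?e = "add_top r (Suc m) D"
  have "?e \<subseteq> {1..Suc m} \<times> {1..Suc m}"
    using sub D_sub unfolding add_top_def by auto
  moreover have "refl_on {1..Suc m} ?e"
    using po(1) unfolding add_top_def refl_on_def by (auto simp: le_Suc_eq)
  moreover have "trans ?e"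
  proof (rule transI)
    fix a b c
    assume "(a, b) \<in> ?e" "(b, c) \<in> ?e"
    then show "(a, c) \<in> ?e"
      using sub D_sub D_min po(2) unfolding add_top_def by (auto dest: transD)
  qed
  moreover have "antisym ?e"
    using po(3) sub D_sub unfolding add_top_def antisym_def by fastforce
  moreover have "naturally_labelled ?e"
    using po(4) sub D_sub unfolding add_top_def naturally_labelled_def by auto
  moreover have "three_free ?e"
    using po(5) sub D_sub D_min unfolding add_top_def three_free_def by fastforce
  ultimately show ?thesis
    unfolding three_free_posets_def partial_order_on_def preorder_on_def by auto
qed

lemma Restr_in_three_free_posets:
  assumes "r \<in> three_free_posets (Suc m)"
  shows "Restr r {1..m} \<in> three_free_posets m"
  using assms partial_order_on_Restr[of "{1..Suc m}" r "{1..m}"]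
    naturally_labelled_mono[of "Restr r {1..m}" r] three_free_mono[of "Restr r {1..m}" r]
  unfolding three_free_posets_def by auto

lemma strictly_below_subset_minimal_elements:
  assumes r: "r \<in> three_free_posets (Suc m)"
  shows "strictly_below r (Suc m) \<subseteq> minimal_elements m (Restr r {1..m})"
proof -
  have "three_free r"
    using r by (simp add: three_free_posets_def)
  then show ?thesis
    using three_free_posets_subset[OF r]
    unfolding strictly_below_def minimal_elements_def three_free_def
    by (auto simp: le_Suc_eq)
qed

lemma add_top_Restr_strictly_below:
  assumes r: "r \<in> three_free_posets (Suc m)"
  shows "add_top (Restr r {1..m}) (Suc m) (strictly_below r (Suc m)) = r"
proof
  have sub: "r \<subseteq> {1..Suc m} \<times> {1..Suc m}" and "refl_on {1..Suc m} r"
    and nat: "naturally_labelled r"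
    using r unfolding three_free_posets_def partial_order_on_def preorder_on_def by auto
  then show "add_top (Restr r {1..m}) (Suc m) (strictly_below r (Suc m)) \<subseteq> r"
    unfolding add_top_def strictly_below_def refl_on_def by auto
  show "r \<subseteq> add_top (Restr r {1..m}) (Suc m) (strictly_below r (Suc m))"
  proof
    fix x
    assume x: "x \<in> r"
    then obtain a b where ab: "x = (a, b)" "a \<le> b"
      using nat unfolding naturally_labelled_def by (cases x) force
    then show "x \<in> add_top (Restr r {1..m}) (Suc m) (strictly_below r (Suc m))"
      using x sub unfolding add_top_def strictly_below_def by (auto simp: le_Suc_eq)
  qed
qed

lemma bij_betw_add_top:
  "bij_betw (\<lambda>(r, D). add_top r (Suc m) D)
     (SIGMA r:three_free_posets m. Pow (minimal_elements m r)) (three_free_posets (Suc m))"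
proof (rule bij_betw_byWitness[where f' = "\<lambda>r. (Restr r {1..m}, strictly_below r (Suc m))"])
  have "Restr (add_top r (Suc m) D) {1..m} = r" "strictly_below (add_top r (Suc m) D) (Suc m) = D"
    if "r \<in> three_free_posets m" "D \<subseteq> minimal_elements m r" for r D
    using three_free_posets_subset[OF that(1)] that(2) minimal_elements_subset[of m r]
    unfolding add_top_def strictly_below_def by auto
  then show "\<forall>x \<in> SIGMA r:three_free_posets m. Pow (minimal_elements m r).
      (\<lambda>r. (Restr r {1..m}, strictly_below r (Suc m))) ((\<lambda>(r, D). add_top r (Suc m) D) x) = x"
    by auto
  show "\<forall>r \<in> three_free_posets (Suc m).
      (\<lambda>(r, D). add_top r (Suc m) D) (Restr r {1..m}, strictly_below r (Suc m)) = r"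
    using add_top_Restr_strictly_below by simp
  show "(\<lambda>(r, D). add_top r (Suc m) D) ` (SIGMA r:three_free_posets m. Pow (minimal_elements m r))
      \<subseteq> three_free_posets (Suc m)"
    using add_top_in_three_free_posets by auto
  show "(\<lambda>r. (Restr r {1..m}, strictly_below r (Suc m))) ` three_free_posets (Suc m)
      \<subseteq> (SIGMA r:three_free_posets m. Pow (minimal_elements m r))"
    using Restr_in_three_free_posets strictly_below_subset_minimal_elements by blast
qed

lemma card_minimal_elements_add_top:
  assumes r: "r \<in> three_free_posets m" and D: "D \<subseteq> minimal_elements m r"
  shows "card (minimal_elements (Suc m) (add_top r (Suc m) D)) =
     (if D = {} then Suc (card (minimal_elements m r)) else card (minimal_elements m r))"
proof -
  have "minimal_elements (Suc m) (add_top r (Suc m) D) =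
      (if D = {} then insert (Suc m) (minimal_elements m r) else minimal_elements m r)"
    using three_free_posets_subset[OF r] D minimal_elements_subset[of m r]
    unfolding minimal_elements_def add_top_def by (auto simp: le_Suc_eq)
  moreover have "Suc m \<notin> minimal_elements m r"
    using minimal_elements_subset by fastforce
  ultimately show ?thesis
    by (simp add: finite_minimal_elements)
qed

lemma p_Suc: "p (Suc m) k = of_bool (k \<ge> 1) * p m (k - 1) + (2 ^ k - 1) * p m k"
proof -
  let ?P = "three_free_posets m"
  let ?c = "\<lambda>r. card (minimal_elements m r)"
  have "p (Suc m) k = card {x \<in> SIGMA r:?P. Pow (minimal_elements m r).
      card (minimal_elements (Suc m) ((\<lambda>(r, D). add_top r (Suc m) D) x)) = k}"
    unfolding p_eq_card_three_free_posets by (rule card_filter_bij_betw[OF bij_betw_add_top])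
  also have "\<dots> = card (SIGMA r:?P. {D \<in> Pow (minimal_elements m r).
      (if D = {} then Suc (?c r) else ?c r) = k})"
    by (rule arg_cong[where f = card]) (auto simp: card_minimal_elements_add_top)
  also have "\<dots> = (\<Sum>r\<in>?P. card {D \<in> Pow (minimal_elements m r).
      (if D = {} then Suc (?c r) else ?c r) = k})"
    by (rule card_SigmaI) (simp_all add: finite_three_free_posets finite_minimal_elements)
  also have "\<dots> = (\<Sum>r\<in>?P. of_bool (Suc (?c r) = k) + of_bool (?c r = k) * (2 ^ k - 1))"
    by (rule sum.cong[OF refl], subst card_Pow_filter_if_empty)
      (auto simp: finite_minimal_elements)
  also have "\<dots> = card {r \<in> ?P. Suc (?c r) = k} + (2 ^ k - 1) * p m k"
    by (simp add: sum.distrib p_eq_card_three_free_posets finite_three_free_posets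
        Int_def conj_commute)
  also have "card {r \<in> ?P. Suc (?c r) = k} = of_bool (k \<ge> 1) * p m (k - 1)"
    unfolding p_eq_card_three_free_posets by (cases k) auto
  finally show ?thesis .
qed

lemma p_Suc_0: "p (Suc m) 0 = 0"
  by (simp add: p_Suc)

lemma p_0_0: "p 0 0 = 1"
proof -
  have "three_free_posets 0 = {{}}"
    using three_free_posets_subset[of _ 0]
    by (auto simp: three_free_posets_def partial_order_on_def preorder_on_def refl_on_def
        trans_def antisym_def naturally_labelled_def three_free_def)
  then show ?thesis
    by (simp add: p_eq_card_three_free_posets minimal_elements_def)
qed

lemma p_eq_0_if_less:
  assumes "n < k"
  shows "p n k = 0"
proof -
  have "card (minimal_elements n r) \<noteq> k" for r
    using card_mono[OF _ minimal_elements_subset, of n r] assms by simp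
  then show ?thesis
    unfolding p_eq_card_three_free_posets by simp
qed

lemma qint_2: "qint (2::nat) k = 2 ^ k - 1"
  using sum_power2[of k] by (simp add: qint_def atLeast0LessThan)

lemma p_eq_qStirling2: "p n k = qStirling2 (2::nat) n k"
proof (induction n arbitrary: k)
  case 0
  then show ?case
    by (cases k) (auto simp: p_0_0 p_eq_0_if_less)
next
  case (Suc n)
  then show ?case
    by (cases k) (auto simp: p_Suc qint_2)
qed

lemma of_nat_p_Suc:
  "(of_nat (p (Suc m) k) :: 'a::comm_ring_1) =
     of_bool (k \<ge> 1) * of_nat (p m (k - 1)) + (2 ^ k - 1) * of_nat (p m k)"
  by (simp add: p_Suc of_nat_diff)

definition F_column :: "nat \<Rightarrow> rat fps" where
  "F_column k = Abs_fps (\<lambda>n. of_nat (p n k))"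

lemma fps_nth_F: "fps_nth F k = F_column k"
  by (simp add: F_def F_column_def)

lemma F_column_0: "F_column 0 = 1"
proof (rule fps_ext)
  fix n
  show "fps_nth (F_column 0) n = fps_nth 1 n"
    by (cases n) (simp_all add: F_column_def p_0_0 p_Suc_0)
qed

lemma F_column_Suc:
  "(1 - fps_const (2 ^ Suc k - 1) * fps_X) * F_column (Suc k) = fps_X * F_column k"
proof (rule fps_ext)
  fix n
  show "fps_nth ((1 - fps_const (2 ^ Suc k - 1) * fps_X) * F_column (Suc k)) n =
      fps_nth (fps_X * F_column k) n"
    by (cases n) (simp_all add: F_column_def p_eq_0_if_less ring_distribs fps_X_mult_nth
        fps_mult_left_const_nth mult.assoc of_nat_p_Suc del: power_Suc)
qed

lemma F_functional_equation: "F = 1 + fps_const fps_X * (subst_2y F - (1 - fps_X) * F)"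
proof (rule fps_ext)
  fix k
  have "fps_nth (1 + fps_const fps_X * (subst_2y F - (1 - fps_X) * F)) k =
      of_bool (k = 0) + fps_X * (fps_const (2 ^ k) * F_column k - F_column k
        + of_bool (k \<noteq> 0) * F_column (k - 1))"
    by (simp add: ring_distribs fps_X_mult_nth subst_2y_def fps_nth_F fps_mult_left_const_nth)
  also have "\<dots> = F_column k"
  proof (rule fps_ext)
    fix n
    show "fps_nth (of_bool (k = 0) + fps_X * (fps_const (2 ^ k) * F_column k - F_column k
        + of_bool (k \<noteq> 0) * F_column (k - 1))) n = fps_nth (F_column k) n"
      by (cases n; cases k) (simp_all add: F_column_def fps_X_mult_nth fps_mult_left_const_nth
          p_0_0 p_Suc_0 p_eq_0_if_less of_nat_p_Suc algebra_simps)
  qed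
  finally show "fps_nth F k = fps_nth (1 + fps_const fps_X * (subst_2y F - (1 - fps_X) * F)) k"
    by (simp add: fps_nth_F)
qed

lemma F_column_mult_prod:
  "F_column k * (\<Prod>i=1..k. 1 - fps_const (2 ^ i - 1) * fps_X) = fps_X ^ k"
proof (induction k)
  case 0
  show ?case
    by (simp add: F_column_0)
next
  case (Suc k)
  let ?Q = "\<lambda>k. \<Prod>i=1..k. 1 - fps_const (2 ^ i - 1) * fps_X :: rat fps"
  have "F_column (Suc k) * ?Q (Suc k) =
      ((1 - fps_const (2 ^ Suc k - 1) * fps_X) * F_column (Suc k)) * ?Q k"
    by (simp add: prod.cl_ivl_Suc mult_ac del: power_Suc)
  also have "\<dots> = fps_X * (F_column k * ?Q k)"
    by (simp only: F_column_Suc mult.assoc)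
  also have "\<dots> = fps_X ^ Suc k"
    using Suc.IH by simp
  finally show ?case .
qed

lemma one_minus_const_times_X_nonzero: "(1 - fps_const c * fps_X :: 'a::comm_ring_1 fps) \<noteq> 0"
proof
  assume "1 - fps_const c * fps_X = 0"
  then have "fps_nth (1 - fps_const c * fps_X) 0 = 0"
    by simp
  then show False
    by simp
qed

lemma F_closed_form:
  "F = Abs_fps (\<lambda>k. fps_X ^ k / (\<Prod>i=1..k. 1 - fps_const (2 ^ i - 1) * fps_X))"
proof (rule fps_ext)
  fix k
  let ?Q = "\<Prod>i=1..k. 1 - fps_const (2 ^ i - 1) * fps_X :: rat fps"
  have "?Q \<noteq> 0"
    using one_minus_const_times_X_nonzero[where 'a = rat] by simp
  then have "F_column k = fps_X ^ k / ?Q"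
    by (simp flip: F_column_mult_prod)
  then show "fps_nth F k =
      fps_nth (Abs_fps (\<lambda>j. fps_X ^ j / (\<Prod>i=1..j. 1 - fps_const (2 ^ i - 1) * fps_X))) k"
    by (simp add: fps_nth_F)
qed

theorem proposition4:
  shows "p 0 0 = 1
    \<and> (\<forall>n\<ge>1. p n 0 = 0)
    \<and> (\<forall>n k. n < k \<longrightarrow> p n k = 0)
    \<and> (\<forall>n\<ge>1. \<forall>k\<ge>1. p n k = p (n - 1) (k - 1) + (2 ^ k - 1) * p (n - 1) k)
    \<and> (\<forall>n k. p n k = qStirling2 (2::nat) n k)
    \<and> F = 1 + fps_const fps_X * (subst_2y F - (1 - fps_X) * F)
    \<and> F = Abs_fps (\<lambda>k. fps_X ^ k / (\<Prod>i=1..k. 1 - fps_const (2 ^ i - 1) * fps_X))"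
proof (intro conjI allI impI)
  show "p n 0 = 0" if "n \<ge> 1" for n
    using that by (cases n) (simp_all add: p_Suc_0)
  show "p n k = p (n - 1) (k - 1) + (2 ^ k - 1) * p (n - 1) k" if "n \<ge> 1" "k \<ge> 1" for n k
    using that by (cases n) (simp_all add: p_Suc)
qed (fact p_0_0 p_eq_0_if_less p_eq_qStirling2 F_functional_equation F_closed_form)+

end
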